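(* Assume the setting in the context and suppose real numbers $L_{jk}\le U_{jk}$ ($j,k\in\{1,\dots,m\}$) satisfy $L_{jk}\le c^*_{jk}\le U_{jk}$ for all $j,k$, for the covariance matrix $\boldsymbol\Sigma^*=(c^*_{jk})=\mathbf M(\mathbf d^* )^{-1}$ of every $\Phi_{\mathfrak B}$-optimal design $\mathbf d^*$. Consider the mixed-integer linear program in variables $\varphi\in\mathbb R$, $z_{ijk}\in\mathbb R$ ($i\in\{1,\dots,n\}$, $j,k\in\{1,\dots,m\}$), symmetric $\boldsymbol\Sigma=(c_{jk})\in\mathbb R^{m\times m}$ and $\mathbf d\in\{0,1\}^n$: minimize $\varphi$ subject to $\varphi\ge\mathrm{tr}(\mathbf B_\ell'\boldsymbol\Sigma\mathbf B_\ell)$ for all $\ell\in\{1,\dots,K\}$; $\sum_{i=1}^n\mathbf f_i\mathbf f_i'\mathbf Z_i=\mathbf I_m$, where $\mathbf Z_i$ is the $m\times m$ matrix with entries $(\mathbf Z_i)_{jk}=z_{ijk}$; $\sum_i d_i=N$; and for all $i,j,k$: $z_{ijk}-d_iL_{jk}\ge0$, $z_{ijk}-d_iU_{jk}-c_{jk}+U_{jk}\ge0$, $z_{ijk}-d_iU_{jk}\le0$, $z_{ijk}-d_iL_{jk}-c_{jk}+L_{jk}\le0$. Then (i) every feasible point satisfies $z_{ijk}=d_ic_{jk}$ for all $i,j,k$, $\mathbf M(\mathbf d)$ is nonsingular and $\boldsymbol\Sigma=\mathbf M(\mathbf d)^{-1}$; and (ii) the optimal value of this program equals the minimum of $\Phi_{\mathfrak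 B}(\mathbf M(\mathbf d))$ over designs with nonsingular $\mathbf M(\mathbf d)$, and the set of $\mathbf d$-components of optimal solutions of the program is exactly the set of $\Phi_{\mathfrak B}$-optimal designs.
   Context: Let $n,m,N,K$ be positive integers with $2\le m\le N\le n$, and let $\mathbf f_1,\dots,\mathbf f_n\in\mathbb R^m$ span $\mathbb R^m$. A (binary) design is $\mathbf d\in\{0,1\}^n$ with $\sum_i d_i=N$; its information matrix is $\mathbf M(\mathbf d)=\sum_{i=1}^n d_i\mathbf f_i\mathbf f_i'$. For $\ell\in\{1,\dots,K\}$ let $\mathbf B_\ell$ be a real $m\times s_\ell$ matrix, $\mathbf B=(\mathbf B_1,\dots,\mathbf B_K)$, with column space of $\mathbf B$ equal to $\mathbb R^m$ and no zero column. For positive definite $\mathbf M$, $\Phi_{\mathfrak B}(\mathbf M)=\max_{\ell}\mathrm{tr}(\mathbf B_\ell'\mathbf M^{-1}\mathbf B_\ell)$. A $\Phi_{\mathfrak B}$-optimal design minimizes $\Phi_{\mathfrak B}(\mathbf M(\mathbf d))$ over designs $\mathbf d$ with nonsingular $\mathbf M(\mathbf d)$. *)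

theory Defs
  imports "HOL-Analysis.Analysis"
begin

text \<open>Design points are indexed by a finite type 'n (so n = CARD('n)), coordinates of
  R^m by a finite type 'm (so m = CARD('m)). The matrix B_l (l = 1..K) is given by its columns
  B l t, t < s l.\<close>

definition outer :: "real^'m \<Rightarrow> real^'m \<Rightarrow> real^'m^'m" where
  "outer u v = (\<chi> j k. u $ j * v $ k)"

definition info_matrix :: "('n::finite \<Rightarrow> real^'m) \<Rightarrow> ('n \<Rightarrow> real) \<Rightarrow> real^'m^'m" where
  "info_matrix f d = (\<Sum>i\<in>UNIV. d i *\<^sub>R outer (f i) (f i))"

definition is_design :: "nat \<Rightarrow> ('n::finite \<Rightarrow> real) \<Rightarrow> bool" where
  "is_design N d \<longleftrightarrow> (\<forall>i. d i \<in> {0, 1}) \<and> (\<Sum>i\<in>UNIV. d i) = real N"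

text \<open>tr(B_l' S B_l) = sum over the columns b of B_l of b' S b.\<close>
definition trBSB :: "(nat \<Rightarrow> nat \<Rightarrow> real^'m) \<Rightarrow> (nat \<Rightarrow> nat) \<Rightarrow> nat \<Rightarrow> real^'m^'m \<Rightarrow> real" where
  "trBSB B s l S = (\<Sum>t<s l. B l t \<bullet> (S *v B l t))"

definition PhiB :: "(nat \<Rightarrow> nat \<Rightarrow> real^'m) \<Rightarrow> (nat \<Rightarrow> nat) \<Rightarrow> nat \<Rightarrow> real^'m^'m \<Rightarrow> real" where
  "PhiB B s K M = Max {trBSB B s l (matrix_inv M) | l. l \<in> {1..K}}"

definition optimal_design ::
  "('n::finite \<Rightarrow> real^'m) \<Rightarrow> nat \<Rightarrow> (nat \<Rightarrow> nat \<Rightarrow> real^'m) \<Rightarrow> (nat \<Rightarrow> nat) \<Rightarrow> nat \<Rightarrow> ('n \<Rightarrow> real) \<Rightarrow> bool" where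
  "optimal_design f N B s K d \<longleftrightarrow> is_design N d \<and> invertible (info_matrix f d) \<and>
     (\<forall>d'. is_design N d' \<and> invertible (info_matrix f d') \<longrightarrow>
        PhiB B s K (info_matrix f d) \<le> PhiB B s K (info_matrix f d'))"

definition milp_feasible ::
  "('n::finite \<Rightarrow> real^'m) \<Rightarrow> nat \<Rightarrow> (nat \<Rightarrow> nat \<Rightarrow> real^'m) \<Rightarrow> (nat \<Rightarrow> nat) \<Rightarrow> nat \<Rightarrow>
   ('m \<Rightarrow> 'm \<Rightarrow> real) \<Rightarrow> ('m \<Rightarrow> 'm \<Rightarrow> real) \<Rightarrow>
   real \<Rightarrow> ('n \<Rightarrow> 'm \<Rightarrow> 'm \<Rightarrow> real) \<Rightarrow> real^'m^'m \<Rightarrow> ('n \<Rightarrow> real) \<Rightarrow> bool" where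
  "milp_feasible f N B s K L U \<phi> z \<Sigma> d \<longleftrightarrow>
     transpose \<Sigma> = \<Sigma> \<and> (\<forall>i. d i \<in> {0, 1}) \<and>
     (\<forall>l\<in>{1..K}. \<phi> \<ge> trBSB B s l \<Sigma>) \<and>
     (\<Sum>i\<in>UNIV. outer (f i) (f i) ** (\<chi> j k. z i j k)) = mat 1 \<and>
     (\<Sum>i\<in>UNIV. d i) = real N \<and>
     (\<forall>i j k. z i j k - d i * L j k \<ge> 0 \<and>
              z i j k - d i * U j k - \<Sigma> $ j $ k + U j k \<ge> 0 \<and>
              z i j k - d i * U j k \<le> 0 \<and>
              z i j k - d i * L j k - \<Sigma> $ j $ k + L j k \<le> 0)"

definition milp_optimal ::
  "('n::finite \<Rightarrow> real^'m) \<Rightarrow> nat \<Rightarrow> (nat \<Rightarrow> nat \<Rightarrow> real^'m) \<Rightarrow> (nat \<Rightarrow> nat) \<Rightarrow> nat \<Rightarrow>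
   ('m \<Rightarrow> 'm \<Rightarrow> real) \<Rightarrow> ('m \<Rightarrow> 'm \<Rightarrow> real) \<Rightarrow>
   real \<Rightarrow> ('n \<Rightarrow> 'm \<Rightarrow> 'm \<Rightarrow> real) \<Rightarrow> real^'m^'m \<Rightarrow> ('n \<Rightarrow> real) \<Rightarrow> bool" where
  "milp_optimal f N B s K L U \<phi> z \<Sigma> d \<longleftrightarrow>
     milp_feasible f N B s K L U \<phi> z \<Sigma> d \<and>
     (\<forall>\<phi>' z' \<Sigma>' d'. milp_feasible f N B s K L U \<phi>' z' \<Sigma>' d' \<longrightarrow> \<phi> \<le> \<phi>')"

definition milp_value ::
  "('n::finite \<Rightarrow> real^'m) \<Rightarrow> nat \<Rightarrow> (nat \<Rightarrow> nat \<Rightarrow> real^'m) \<Rightarrow> (nat \<Rightarrow> nat) \<Rightarrow> nat \<Rightarrow>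
   ('m \<Rightarrow> 'm \<Rightarrow> real) \<Rightarrow> ('m \<Rightarrow> 'm \<Rightarrow> real) \<Rightarrow> real" where
  "milp_value f N B s K L U = Inf {\<phi>. \<exists>z \<Sigma> d. milp_feasible f N B s K L U \<phi> z \<Sigma> d}"

end

theory Submission
  imports Defs
begin

text \<open>With \<open>d\<^sub>i \<in> {0,1}\<close>, the four linear constraints on \<open>z\<^sub>i\<^sub>j\<^sub>k\<close> are a big-M linearization
  of \<open>z\<^sub>i\<^sub>j\<^sub>k = d\<^sub>i c\<^sub>j\<^sub>k\<close>: in both cases they say exactly \<open>z\<^sub>i\<^sub>j\<^sub>k = d\<^sub>i c\<^sub>j\<^sub>k\<close> and
  \<open>L\<^sub>j\<^sub>k \<le> c\<^sub>j\<^sub>k \<le> U\<^sub>j\<^sub>k\<close>. The matrix constraint then reads \<open>M(d) \<Sigma> = I\<close>, so \<open>\<Sigma> = M(d)\<^sup>-\<^sup>1\<close>.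
  Hence the feasible points are the designs with nonsingular \<open>M(d)\<close> whose inverse lies between
  \<open>L\<close> and \<open>U\<close>, together with any \<open>\<phi> \<ge> \<Phi>(M(d))\<close>. This set contains all \<open>\<Phi>\<close>-optimal designs
  by hypothesis, and there is at least one since the designs form a finite nonempty set, so
  the program attains exactly the optimal design value, at exactly the optimal designs.\<close>

lemma matrix_inv_inverse:
  fixes A :: "real^'m^'m"
  assumes "invertible A"
  shows "A ** matrix_inv A = mat 1 \<and> matrix_inv A ** A = mat 1"
  using assms unfolding invertible_def matrix_inv_def by (rule someI_ex)

lemma right_inverse_eq_matrix_inv:
  fixes A :: "real^'m::finite^'m"
  assumes "A ** S = mat 1"
  shows "invertible A" "S = matrix_inv A"
proof -
  show inv: "invertible A" using assms invertible_right_inverse by blast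
  have "matrix_inv A = matrix_inv A ** (A ** S)" using assms by simp
  also have "\<dots> = S" using matrix_inv_inverse[OF inv] by (simp add: matrix_mul_assoc)
  finally show "S = matrix_inv A" by simp
qed

lemma symmetric_matrix_inv:
  fixes M :: "real^'m::finite^'m"
  assumes "transpose M = M" "invertible M"
  shows "transpose (matrix_inv M) = matrix_inv M"
proof -
  have "M ** transpose (matrix_inv M) = mat 1"
    using arg_cong[of _ _ transpose, OF conjunct2[OF matrix_inv_inverse[OF assms(2)]]]
    by (simp add: matrix_transpose_mul assms(1))
  thus ?thesis using right_inverse_eq_matrix_inv(2) by metis
qed

lemma info_matrix_symmetric: "transpose (info_matrix f d) = info_matrix f d"
  by (simp add: vec_eq_iff transpose_def info_matrix_def outer_def mult.commute)

lemma sum_outer_mult_scaled: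
  fixes S :: "real^'m::finite^'m"
  shows "(\<Sum>i\<in>UNIV. outer (f i) (f i) ** (\<chi> j k. d i * S $ j $ k)) = info_matrix f d ** S"
  unfolding vec_eq_iff info_matrix_def outer_def matrix_matrix_mult_def
  by (simp add: sum_distrib_left sum_distrib_right mult_ac) (subst sum.swap, simp add: mult_ac)

lemma info_matrix_quadratic_form:
  fixes f :: "'n::finite \<Rightarrow> real^'m::finite"
  shows "x \<bullet> (info_matrix f d *v x) = (\<Sum>i\<in>UNIV. d i * (f i \<bullet> x)\<^sup>2)"
proof -
  have "info_matrix f d *v x = (\<Sum>i\<in>UNIV. (d i * (f i \<bullet> x)) *\<^sub>R f i)"
    unfolding vec_eq_iff info_matrix_def outer_def matrix_vector_mult_def inner_vec_def
    by (simp add: sum_distrib_left sum_distrib_right mult_ac) (subst sum.swap, simp add: mult_ac)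
  thus ?thesis by (simp add: inner_sum_right power2_eq_square inner_commute mult_ac)
qed

lemma invertible_info_matrix_indicator:
  fixes f :: "'n::finite \<Rightarrow> real^'m::finite"
  assumes span: "span (f ` J) = UNIV"
  shows "invertible (info_matrix f (\<lambda>i. if i \<in> J then 1 else 0))"
proof -
  let ?d = "\<lambda>i. if i \<in> J then 1 else (0::real)"
  have "x = 0" if "info_matrix f ?d *v x = 0" for x
  proof -
    have "(\<Sum>i\<in>UNIV. ?d i * (f i \<bullet> x)\<^sup>2) = 0"
      using that info_matrix_quadratic_form[of x f ?d] by simp
    hence "\<forall>i. ?d i * (f i \<bullet> x)\<^sup>2 = 0"
      by (subst (asm) sum_nonneg_eq_0_iff) auto
    hence "\<And>y. y \<in> f ` J \<Longrightarrow> orthogonal x y"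
      by (auto simp: orthogonal_def inner_commute) (metis one_neq_zero)
    hence "orthogonal x x" using orthogonal_to_span[of x "f ` J" x] span by blast
    thus "x = 0" by (simp add: orthogonal_def)
  qed
  thus ?thesis using matrix_left_invertible_ker invertible_left_inverse by blast
qed

text \<open>Extend a basis chosen among the \<open>f i\<close> (at most \<open>m \<le> N\<close> of them) to \<open>N\<close> support points.\<close>
lemma design_with_invertible_info_matrix_exists:
  fixes f :: "'n::finite \<Rightarrow> real^'m::finite"
  assumes "CARD('m) \<le> N" and "N \<le> CARD('n)" and "span (range f) = UNIV"
  shows "\<exists>d. is_design N d \<and> invertible (info_matrix f d)"
proof -
  obtain Bs where Bs: "Bs \<subseteq> range f" "independent Bs" "range f \<subseteq> span Bs"
    using maximal_independent_subset by blast
  have span_Bs: "span Bs = UNIV"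
    using assms(3) span_mono[OF Bs(3)] by (auto simp: span_span)
  have Bs_finite: "finite Bs" and Bs_card: "card Bs \<le> CARD('m)"
    using independent_bound[OF Bs(2)] by auto
  define I where "I = inv f ` Bs"
  have f_I: "f ` I = Bs" unfolding I_def using Bs(1) by (force simp: image_image f_inv_into_f)
  have "card I \<le> N"
    unfolding I_def using card_image_le[OF Bs_finite, of "inv f"] Bs_card assms(1) by linarith
  moreover have "N - card I \<le> card (UNIV - I)" using assms(2) by (simp add: card_Diff_subset)
  then obtain T where T: "T \<subseteq> UNIV - I" "card T = N - card I"
    by (meson obtain_subset_with_card_n)
  ultimately have card_J: "card (I \<union> T) = N" by (subst card_Un_disjoint) auto
  have "span (f ` (I \<union> T)) = UNIV"
    using span_Bs f_I span_mono[of "f ` I" "f ` (I \<union> T)"] by auto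
  hence "invertible (info_matrix f (\<lambda>i. if i \<in> I \<union> T then 1 else 0))"
    by (rule invertible_info_matrix_indicator)
  moreover have "is_design N (\<lambda>i. if i \<in> I \<union> T then 1 else 0)"
    using card_J by (simp add: is_design_def sum.If_cases Un_def)
  ultimately show ?thesis by blast
qed

lemma finite_designs: "finite {d :: 'n::finite \<Rightarrow> real. is_design N d}"
proof (rule finite_subset)
  show "{d. is_design N d} \<subseteq> (\<Pi>\<^sub>E i\<in>UNIV. {0, 1 :: real})"
    by (auto simp: PiE_def is_design_def)
  show "finite (\<Pi>\<^sub>E i\<in>(UNIV :: 'n set). {0, 1 :: real})"
    by (simp add: finite_PiE)
qed

lemma optimal_design_exists:
  fixes f :: "'n::finite \<Rightarrow> real^'m::finite"
  assumes "CARD('m) \<le> N" and "N \<le> CARD('n)" and "span (range f) = UNIV"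
  shows "\<exists>d. optimal_design f N B s K d"
proof -
  let ?D = "{d. is_design N d \<and> invertible (info_matrix f d)}"
  let ?\<Phi> = "\<lambda>d. PhiB B s K (info_matrix f d)"
  have "finite ?D" using finite_designs by (rule rev_finite_subset) auto
  moreover have "?D \<noteq> {}" using design_with_invertible_info_matrix_exists[OF assms] by auto
  ultimately have "Min (?\<Phi> ` ?D) \<in> ?\<Phi> ` ?D" by (intro Min_in) auto
  then obtain d where "d \<in> ?D" and "?\<Phi> d = Min (?\<Phi> ` ?D)" by force
  with \<open>finite ?D\<close> show ?thesis unfolding optimal_design_def by auto
qed

lemma PhiB_le_iff:
  assumes "1 \<le> K"
  shows "PhiB B s K M \<le> \<phi> \<longleftrightarrow> (\<forall>l\<in>{1..K}. trBSB B s l (matrix_inv M) \<le> \<phi>)"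
proof -
  have "{trBSB B s l (matrix_inv M) | l. l \<in> {1..K}} = (\<lambda>l. trBSB B s l (matrix_inv M)) ` {1..K}"
    by auto
  thus ?thesis unfolding PhiB_def using assms by (simp add: Max_le_iff)
qed

lemma big_M_constraints_iff:
  fixes z \<delta> c L U :: real
  assumes "\<delta> \<in> {0, 1}"
  shows "(z - \<delta> * L \<ge> 0 \<and> z - \<delta> * U - c + U \<ge> 0 \<and> z - \<delta> * U \<le> 0 \<and> z - \<delta> * L - c + L \<le> 0)
    \<longleftrightarrow> z = \<delta> * c \<and> L \<le> c \<and> c \<le> U"
  using assms by auto

lemma milp_feasible_iff:
  fixes f :: "'n::finite \<Rightarrow> real^'m::finite"
  assumes "1 \<le> K"
  shows "milp_feasible f N B s K L U \<phi> z \<Sigma> d \<longleftrightarrow>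
    is_design N d \<and> invertible (info_matrix f d) \<and> \<Sigma> = matrix_inv (info_matrix f d) \<and>
    (\<forall>i j k. z i j k = d i * \<Sigma> $ j $ k) \<and> (\<forall>j k. L j k \<le> \<Sigma> $ j $ k \<and> \<Sigma> $ j $ k \<le> U j k) \<and>
    PhiB B s K (info_matrix f d) \<le> \<phi>"
    (is "?feasible \<longleftrightarrow> ?design \<and> ?inv \<and> ?\<Sigma> \<and> ?z \<and> ?bounds \<and> ?\<phi>")
proof
  assume F: ?feasible
  hence ?design unfolding milp_feasible_def is_design_def by auto
  have z_bounds: "z i j k = d i * \<Sigma> $ j $ k \<and> L j k \<le> \<Sigma> $ j $ k \<and> \<Sigma> $ j $ k \<le> U j k" for i j k
    using F big_M_constraints_iff[where \<delta> = "d i" and z = "z i j k" and c = "\<Sigma> $ j $ k"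
        and L = "L j k" and U = "U j k"]
    unfolding milp_feasible_def by auto
  hence "info_matrix f d ** \<Sigma> = mat 1"
    using F by (simp add: milp_feasible_def sum_outer_mult_scaled)
  note \<Sigma>_inv = right_inverse_eq_matrix_inv[OF this]
  moreover have ?\<phi> using F \<Sigma>_inv(2) by (simp add: milp_feasible_def PhiB_le_iff[OF assms])
  ultimately show "?design \<and> ?inv \<and> ?\<Sigma> \<and> ?z \<and> ?bounds \<and> ?\<phi>"
    using \<open>?design\<close> z_bounds by blast
next
  assume H: "?design \<and> ?inv \<and> ?\<Sigma> \<and> ?z \<and> ?bounds \<and> ?\<phi>"
  hence design: ?design and inv: ?inv and \<Sigma>: ?\<Sigma> and z: ?z and bounds: ?bounds and \<phi>: ?\<phi>
    by blast+
  have "z i j k - d i * L j k \<ge> 0 \<and> z i j k - d i * U j k - \<Sigma> $ j $ k + U j k \<ge> 0 \<and>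
      z i j k - d i * U j k \<le> 0 \<and> z i j k - d i * L j k - \<Sigma> $ j $ k + L j k \<le> 0" for i j k
  proof -
    have "d i \<in> {0, 1}" using design by (simp add: is_design_def)
    thus ?thesis
      using z bounds big_M_constraints_iff[where \<delta> = "d i" and z = "z i j k" and c = "\<Sigma> $ j $ k"
          and L = "L j k" and U = "U j k"] by blast
  qed
  moreover have "transpose \<Sigma> = \<Sigma>"
    using \<Sigma> symmetric_matrix_inv[OF info_matrix_symmetric inv] by simp
  moreover have "info_matrix f d ** \<Sigma> = mat 1"
    using \<Sigma> matrix_inv_inverse[OF inv] by simp
  hence "(\<Sum>i\<in>UNIV. outer (f i) (f i) ** (\<chi> j k. z i j k)) = mat 1"
    using z by (simp add: sum_outer_mult_scaled)
  ultimately show ?feasible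
    using design \<Sigma> \<phi> by (auto simp: milp_feasible_def is_design_def PhiB_le_iff[OF assms])
qed

context
  fixes f :: "'n::finite \<Rightarrow> real^'m::finite"
    and N K :: nat and B :: "nat \<Rightarrow> nat \<Rightarrow> real^'m" and s :: "nat \<Rightarrow> nat"
    and L U :: "'m \<Rightarrow> 'm \<Rightarrow> real"
  assumes K: "1 \<le> K"
    and bounds: "\<forall>d. optimal_design f N B s K d \<longrightarrow>
        (\<forall>j k. L j k \<le> matrix_inv (info_matrix f d) $ j $ k \<and>
               matrix_inv (info_matrix f d) $ j $ k \<le> U j k)"
begin

lemma optimal_design_imp_milp_feasible:
  assumes "optimal_design f N B s K d"
  shows "milp_feasible f N B s K L U (PhiB B s K (info_matrix f d))
      (\<lambda>i j k. d i * matrix_inv (info_matrix f d) $ j $ k) (matrix_inv (info_matrix f d)) d"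
  using assms bounds by (simp add: milp_feasible_iff[OF K] optimal_design_def)

lemma optimal_value_le_milp_feasible:
  assumes "optimal_design f N B s K d" and "milp_feasible f N B s K L U \<phi> z \<Sigma> d'"
  shows "PhiB B s K (info_matrix f d) \<le> \<phi>"
proof -
  have "is_design N d'" "invertible (info_matrix f d')" "PhiB B s K (info_matrix f d') \<le> \<phi>"
    using assms(2) by (simp_all add: milp_feasible_iff[OF K])
  thus ?thesis using assms(1) unfolding optimal_design_def by (meson order_trans)
qed

lemma optimal_design_imp_milp_optimal:
  assumes "optimal_design f N B s K d"
  shows "milp_optimal f N B s K L U (PhiB B s K (info_matrix f d))
      (\<lambda>i j k. d i * matrix_inv (info_matrix f d) $ j $ k) (matrix_inv (info_matrix f d)) d"
  unfolding milp_optimal_def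
  using optimal_design_imp_milp_feasible[OF assms] optimal_value_le_milp_feasible[OF assms] by blast

lemma milp_optimal_imp_optimal_design:
  assumes opt: "optimal_design f N B s K d\<^sub>0" and milp: "milp_optimal f N B s K L U \<phi> z \<Sigma> d"
  shows "optimal_design f N B s K d"
proof -
  have d: "is_design N d" "invertible (info_matrix f d)" "PhiB B s K (info_matrix f d) \<le> \<phi>"
    using milp by (simp_all add: milp_optimal_def milp_feasible_iff[OF K])
  have "\<phi> \<le> PhiB B s K (info_matrix f d\<^sub>0)"
    using milp optimal_design_imp_milp_feasible[OF opt] unfolding milp_optimal_def by blast
  moreover have "PhiB B s K (info_matrix f d\<^sub>0) \<le> PhiB B s K (info_matrix f d')"
    if "is_design N d'" "invertible (info_matrix f d')" for d'
    using opt that unfolding optimal_design_def by blast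
  ultimately show ?thesis
    using d unfolding optimal_design_def by (meson order_trans)
qed

end

theorem mainTheorem7:
  fixes f :: "'n::finite \<Rightarrow> real^'m::finite"
    and N K :: nat
    and B :: "nat \<Rightarrow> nat \<Rightarrow> real^'m"
    and s :: "nat \<Rightarrow> nat"
    and L U :: "'m \<Rightarrow> 'm \<Rightarrow> real"
  assumes "2 \<le> CARD('m)"
    and mN: "CARD('m) \<le> N"
    and Nn: "N \<le> CARD('n)"
    and fspan: "span (range f) = UNIV"
    and K1: "1 \<le> K"
    and "\<forall>l\<in>{1..K}. 1 \<le> s l"
    and "span {B l t | l t. l \<in> {1..K} \<and> t < s l} = UNIV"
    and "\<forall>l\<in>{1..K}. \<forall>t<s l. B l t \<noteq> 0"
    and "\<forall>j k. L j k \<le> U j k"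
    and bounds: "\<forall>d. optimal_design f N B s K d \<longrightarrow>
        (\<forall>j k. L j k \<le> matrix_inv (info_matrix f d) $ j $ k \<and>
               matrix_inv (info_matrix f d) $ j $ k \<le> U j k)"
  shows "(\<forall>\<phi> z \<Sigma> d. milp_feasible f N B s K L U \<phi> z \<Sigma> d \<longrightarrow>
            (\<forall>i j k. z i j k = d i * \<Sigma> $ j $ k) \<and>
            invertible (info_matrix f d) \<and> \<Sigma> = matrix_inv (info_matrix f d))
       \<and> (\<exists>\<phi> z \<Sigma> d. milp_optimal f N B s K L U \<phi> z \<Sigma> d)
       \<and> milp_value f N B s K L U =
           Min {PhiB B s K (info_matrix f d) | d. is_design N d \<and> invertible (info_matrix f d)}
       \<and> {d. \<exists>\<phi> z \<Sigma>. milp_optimal f N B s K L U \<phi> z \<Sigma> d} = {d. optimal_design f N B s K d}"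
proof -
  obtain d\<^sub>0 where opt: "optimal_design f N B s K d\<^sub>0"
    using optimal_design_exists[OF mN Nn fspan] by blast
  let ?opt = "PhiB B s K (info_matrix f d\<^sub>0)"
  have "milp_value f N B s K L U = ?opt"
    unfolding milp_value_def
    using optimal_design_imp_milp_feasible[OF K1 bounds opt] optimal_value_le_milp_feasible[OF K1 bounds opt]
    by (intro cInf_eq_minimum) auto
  moreover have "Min {PhiB B s K (info_matrix f d) | d. is_design N d \<and> invertible (info_matrix f d)}
      = ?opt" (is "Min ?values = _")
  proof (rule Min_eqI)
    have "?values \<subseteq> (\<lambda>d. PhiB B s K (info_matrix f d)) ` {d. is_design N d}" by blast
    thus "finite ?values" by (rule finite_surj[OF finite_designs])
  qed (use opt in \<open>auto simp: optimal_design_def\<close>)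
  ultimately have "milp_value f N B s K L U =
      Min {PhiB B s K (info_matrix f d) | d. is_design N d \<and> invertible (info_matrix f d)}"
    by simp
  moreover have "{d. \<exists>\<phi> z \<Sigma>. milp_optimal f N B s K L U \<phi> z \<Sigma> d} = {d. optimal_design f N B s K d}"
    using milp_optimal_imp_optimal_design[OF K1 bounds opt] optimal_design_imp_milp_optimal[OF K1 bounds]
    by blast
  ultimately show ?thesis
    using milp_feasible_iff[OF K1] optimal_design_imp_milp_optimal[OF K1 bounds opt] by blast
qed

end
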